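(* Let $n\ge1$ be an integer, $0<h<1$, and let $K$ be a kernel supported on $[-1,1]$, symmetric about $0$, bounded, with $\int_{-1}^1K(x)dx=1$, such that $1-\int_{-2/n}^{2/n}\frac1hK(\frac uh)du\ne0$. For $t\in\mathbb{Z}$ define $$K_n^h(t)=\frac{\int_{|t|/n}^{(|t|+1)/n}\frac1hK(\frac uh)\,du}{1-\int_{-2/n}^{2/n}\frac1hK(\frac uh)\,du}\,\mathbb{1}_{\{|t|\ge2\}}.$$ Then for every integer $i$ with $\lceil nh\rceil\le i\le n-\lceil nh\rceil$ we have $\sum_{j=0}^{n-1}K_n^h(i-j)=1$. *)

theory Defs
  imports "HOL-Analysis.Analysis"
begin

definition Kh :: "(real \<Rightarrow> real) \<Rightarrow> real \<Rightarrow> real \<Rightarrow> real" where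
  "Kh K h u = (1 / h) * K (u / h)"

definition Knh :: "(real \<Rightarrow> real) \<Rightarrow> nat \<Rightarrow> real \<Rightarrow> int \<Rightarrow> real" where
  "Knh K n h t =
     (if \<bar>t\<bar> \<ge> 2 then
        integral {real_of_int \<bar>t\<bar> / real n .. (real_of_int \<bar>t\<bar> + 1) / real n} (Kh K h)
        / (1 - integral {-2 / real n .. 2 / real n} (Kh K h))
      else 0)"

end

theory Submission
  imports Defs
begin

text \<open>Write \<open>F x = \<integral>\<^sub>0\<^sup>x K\<^sub>h\<close>. For \<open>|t| \<ge> 2\<close> the numerator of \<open>K\<^sub>n\<^sup>h(t)\<close> is
  \<open>F((|t|+1)/n) - F(|t|/n)\<close>, and by symmetry the denominator is \<open>1 - 2 F(2/n)\<close>. Summing over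
  \<open>j\<close>, the terms with \<open>j < i\<close> and those with \<open>j > i\<close> telescope separately to
  \<open>F((i+1)/n) - F(2/n)\<close> and \<open>F((n-i)/n) - F(2/n)\<close>. The constraint on \<open>i\<close> puts both
  \<open>(i+1)/n\<close> and \<open>(n-i)/n\<close> beyond the support \<open>[-h,h]\<close> of \<open>K\<^sub>h\<close>, where \<open>F = 1/2\<close>,
  so the numerators add up to the denominator.\<close>

lemma sum_lessThan_telescope_from:
  fixes G :: "nat \<Rightarrow> 'a::ab_group_add"
  assumes "k \<le> N"
  shows "(\<Sum>m<N. if k \<le> m then G (Suc m) - G m else 0) = G N - G k"
proof -
  have split: "{..<N} = {..<k} \<union> {k..<N}" using assms by auto
  have "(\<Sum>m<N. if k \<le> m then G (Suc m) - G m else 0) = (\<Sum>m=k..<N. G (Suc m) - G m)"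
    unfolding split by (subst sum.union_disjoint) auto
  also have "\<dots> = G N - G k"
    using assms by (simp add: sum_Suc_diff')
  finally show ?thesis .
qed

lemma sum_lessThan_abs_diff:
  fixes f :: "int \<Rightarrow> 'a::comm_monoid_add"
  assumes "p < n"
  shows "(\<Sum>j<n. f \<bar>int p - int j\<bar>) + f 0 = (\<Sum>m\<le>p. f (int m)) + (\<Sum>m<n - p. f (int m))"
proof -
  have split: "{..<n} = {..p} \<union> {Suc p..<n}" using assms by auto
  have "(\<Sum>j<n. f \<bar>int p - int j\<bar>) = (\<Sum>j\<le>p. f \<bar>int p - int j\<bar>) + (\<Sum>j=Suc p..<n. f \<bar>int p - int j\<bar>)"
    unfolding split by (subst sum.union_disjoint) auto
  moreover have "(\<Sum>j\<le>p. f \<bar>int p - int j\<bar>) = (\<Sum>m\<le>p. f (int m))"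
    by (rule sum.reindex_bij_witness[of _ "\<lambda>m. p - m" "\<lambda>j. p - j"]) auto
  moreover have "(\<Sum>j=Suc p..<n. f \<bar>int p - int j\<bar>) = (\<Sum>m=Suc 0..<n - p. f (int m))"
    by (rule sum.reindex_bij_witness[of _ "\<lambda>m. m + p" "\<lambda>j. j - p"]) auto
  moreover have "(\<Sum>m<n - p. f (int m)) = f 0 + (\<Sum>m=Suc 0..<n - p. f (int m))"
    using assms by (simp add: lessThan_atLeast0 sum.atLeast_Suc_lessThan)
  ultimately show ?thesis by (simp add: ac_simps)
qed

lemma sum_lessThan_abs_diff_telescope:
  fixes f :: "int \<Rightarrow> 'a::ab_group_add" and G :: "nat \<Rightarrow> 'a"
  assumes f: "\<And>m. f (int m) = (if k \<le> m then G (Suc m) - G m else 0)"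
    and "0 < k" "k \<le> p" "p + k \<le> n"
  shows "(\<Sum>j<n. f \<bar>int p - int j\<bar>) = (G (Suc p) - G k) + (G (n - p) - G k)"
proof -
  have "f 0 = 0"
    using f[of 0] \<open>0 < k\<close> by simp
  moreover have "(\<Sum>m\<le>p. f (int m)) = G (Suc p) - G k"
    using sum_lessThan_telescope_from[of k "Suc p" G] assms by (simp add: f lessThan_Suc_atMost)
  moreover have "(\<Sum>m<n - p. f (int m)) = G (n - p) - G k"
    using sum_lessThan_telescope_from[of k "n - p" G] assms by (simp add: f)
  ultimately show ?thesis
    using sum_lessThan_abs_diff[of p n f] assms by simp
qed

lemma ceiling_window_bounds:
  fixes h :: real and i :: int
  assumes "2 < n * h" and "\<lceil>n * h\<rceil> \<le> i" and "i \<le> int n - \<lceil>n * h\<rceil>"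
  obtains p :: nat where "i = int p" "2 \<le> p" "p + 2 \<le> n" "h \<le> p / n" "h \<le> (n - p) / n"
proof -
  have "3 \<le> \<lceil>n * h\<rceil>"
    using assms(1) by linarith
  with assms(2) have "0 \<le> i"
    by linarith
  then obtain p where i: "i = int p"
    using nonneg_int_cases by blast
  have "2 \<le> p" "p + 2 \<le> n"
    using i assms(2,3) \<open>3 \<le> \<lceil>n * h\<rceil>\<close> by linarith+
  have "n * h \<le> p" "n * h \<le> real n - p"
    using i assms(2,3) le_of_int_ceiling[of "n * h"] by linarith+
  then have "h \<le> p / n" "h \<le> (n - p) / n"
    using \<open>p + 2 \<le> n\<close> by (simp_all add: field_simps of_nat_diff)
  with i \<open>2 \<le> p\<close> \<open>p + 2 \<le> n\<close> show thesis
    using that by blast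
qed

lemma integrable_on_if_vanishes_outside:
  fixes g :: "real \<Rightarrow> 'a::banach"
  assumes "(g has_integral I) {c..d}" and "\<And>x. x \<notin> {c..d} \<Longrightarrow> g x = 0"
  shows "g integrable_on {a..b}"
proof -
  have "(g has_integral I) {min a c..max b d}"
    by (rule has_integral_on_superset[OF assms]) auto
  then show ?thesis
    by (rule integrable_subinterval_real[OF has_integral_integrable]) auto
qed

lemma integral_even_symmetric:
  fixes g :: "real \<Rightarrow> real"
  assumes even: "\<And>x. g (- x) = g x" and "g integrable_on {-a..a}" and "0 \<le> a"
  shows "integral {-a..a} g = 2 * integral {0..a} g"
proof -
  have "integral {-a..0} g = integral {-a..-0} (\<lambda>x. g (- x))"
    by (simp add: even)
  also have "\<dots> = integral {0..a} g"
    by (rule Henstock_Kurzweil_Integration.integral_reflect_real)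
  finally have "integral {-a..0} g = integral {0..a} g" .
  moreover have "integral {-a..0} g + integral {0..a} g = integral {-a..a} g"
    by (rule Henstock_Kurzweil_Integration.integral_combine) (use assms in auto)
  ultimately show ?thesis by simp
qed

lemma integral_even_half_mass:
  fixes g :: "real \<Rightarrow> real"
  assumes even: "\<And>x. g (- x) = g x" and mass: "(g has_integral I) {-c..c}"
    and vanish: "\<And>x. x \<notin> {-c..c} \<Longrightarrow> g x = 0" and "0 \<le> c" and "c \<le> x"
  shows "integral {0..x} g = I / 2"
proof -
  have "(g has_integral I) {-x..x}"
    by (rule has_integral_on_superset[OF mass vanish]) (use assms in auto)
  then have "2 * integral {0..x} g = I"
    using integral_even_symmetric[of g x, OF even] assms
    by (metis has_integral_integrable integral_unique order_trans)
  then show ?thesis by simp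
qed

lemma Kh_minus:
  assumes "\<And>x. K (- x) = K x"
  shows "Kh K h (- u) = Kh K h u"
  using assms[of "u / h"] by (simp add: Kh_def)

lemma Kh_eq_0:
  assumes "0 < h" and "\<And>x. 1 < \<bar>x\<bar> \<Longrightarrow> K x = 0" and "u \<notin> {-h..h}"
  shows "Kh K h u = 0"
proof -
  have "1 < \<bar>u / h\<bar>"
    using assms by (auto simp: abs_divide less_divide_eq)
  with assms show ?thesis by (simp add: Kh_def)
qed

lemma has_integral_Kh:
  assumes "0 < h" and "(K has_integral I) {-1..1}"
  shows "(Kh K h has_integral I) {-h..h}"
proof -
  have "(\<lambda>x. x / (1 / h)) ` {-1..1} = (\<lambda>x. h * x) ` {-1..1}"
    by (simp add: mult.commute)
  also have "\<dots> = {-h..h}"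
    using assms by (simp add: image_mult_atLeastAtMost)
  finally have "(\<lambda>x. x / (1 / h)) ` {-1..1} = {-h..h}" .
  moreover have "((\<lambda>x. K (1 / h * x)) has_integral (1 / \<bar>1 / h\<bar>) *\<^sub>R I) ((\<lambda>x. x / (1 / h)) ` {-1..1})"
    by (rule has_integral_stretch_real) (use assms in auto)
  ultimately have "((\<lambda>x. K (x / h)) has_integral h * I) {-h..h}"
    using assms by simp
  from has_integral_cmul[OF this, of "1 / h"] show ?thesis
    using assms by (simp add: Kh_def [abs_def])
qed

lemma Knh_abs: "Knh K n h \<bar>t\<bar> = Knh K n h t"
  by (simp add: Knh_def)

lemma Knh_of_nat:
  assumes integrable: "\<And>a b. Kh K h integrable_on {a..b}"
    and even: "\<And>u. Kh K h (- u) = Kh K h u"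
  shows "Knh K n h (int m) =
    (if 2 \<le> m
     then (integral {0..(m + 1) / n} (Kh K h) - integral {0..m / n} (Kh K h))
          / (1 - 2 * integral {0..2 / n} (Kh K h))
     else 0)"
proof (cases "2 \<le> m")
  case True
  have "integral {m / n..(m + 1) / n} (Kh K h) =
      integral {0..(m + 1) / n} (Kh K h) - integral {0..m / n} (Kh K h)"
    using Henstock_Kurzweil_Integration.integral_combine[OF _ _ integrable, of 0 "m / n" "(m + 1) / n"]
    by (simp add: divide_right_mono)
  moreover have "integral {-2 / n..2 / n} (Kh K h) = 2 * integral {0..2 / n} (Kh K h)"
    using integral_even_symmetric[OF even integrable, of "2 / n"] by simp
  ultimately show ?thesis
    using True by (simp add: Knh_def add.commute)
qed (simp add: Knh_def)

theorem lemma7p1: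
  fixes K :: "real \<Rightarrow> real" and n :: nat and h :: real and i :: int
  assumes n_pos: "n \<ge> 1"
    and h_pos: "0 < h" and h_lt1: "h < 1"
    and supp: "\<And>x. \<bar>x\<bar> > 1 \<Longrightarrow> K x = 0"
    and symm: "\<And>x. K (- x) = K x"
    and bdd: "bounded (range K)"
    and int1: "(K has_integral 1) {-1..1}"
    and denom: "1 - integral {-2 / real n .. 2 / real n} (Kh K h) \<noteq> 0"
    and i_lo: "\<lceil>real n * h\<rceil> \<le> i"
    and i_hi: "i \<le> int n - \<lceil>real n * h\<rceil>"
  shows "(\<Sum>j = 0..<n. Knh K n h (i - int j)) = 1"
proof -
  note even = Kh_minus[of K, OF symm]
  note vanish = Kh_eq_0[OF h_pos supp]
  note mass = has_integral_Kh[OF h_pos int1]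
  note integrable = integrable_on_if_vanishes_outside[OF mass vanish]
  have half: "integral {0..x} (Kh K h) = 1 / 2" if "h \<le> x" for x
    using integral_even_half_mass[OF even mass vanish] h_pos that by simp
  define I where "I = integral {0..2 / n} (Kh K h)"
  define D where "D = 1 - 2 * I"
  have "D \<noteq> 0"
    using denom integral_even_symmetric[OF even integrable, of "2 / n"] by (simp add: D_def I_def)
  then have "2 / n < h"
    using half[of "2 / n"] by (force simp: D_def I_def)
  then have "2 < n * h"
    using n_pos by (simp add: field_simps)
  then obtain p where i: "i = int p" and p: "2 \<le> p" "p + 2 \<le> n"
    and "h \<le> p / n" "h \<le> (n - p) / n"
    using i_lo i_hi by (rule ceiling_window_bounds)
  then have "h \<le> Suc p / n"
    using divide_right_mono[of p "Suc p" n] by simp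
  define G where "G m = integral {0..m / n} (Kh K h) / D" for m :: nat
  have Knh_G: "Knh K n h (int m) = (if 2 \<le> m then G (Suc m) - G m else 0)" for m
    using Knh_of_nat[OF integrable even] by (simp add: G_def D_def I_def diff_divide_distrib add.commute)
  have "(\<Sum>j<n. Knh K n h \<bar>int p - int j\<bar>) = (G (Suc p) - G 2) + (G (n - p) - G 2)"
    by (rule sum_lessThan_abs_diff_telescope[OF Knh_G _ p]) simp
  also have "\<dots> = (1 / 2 / D - I / D) + (1 / 2 / D - I / D)"
    unfolding G_def I_def
    by (simp only: half[OF \<open>h \<le> Suc p / n\<close>] half[OF \<open>h \<le> (n - p) / n\<close>] of_nat_numeral)
  also have "\<dots> = (1 - 2 * I) / D"
    by (simp add: diff_divide_distrib)
  also have "\<dots> = 1"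
    using \<open>D \<noteq> 0\<close> by (simp flip: D_def)
  finally show ?thesis
    by (simp add: i Knh_abs atLeast0LessThan)
qed

end
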